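(* Let $V\colon\mathbb{R}^2\to\mathbb{R}$ be continuous with $\inf_{\mathbb{R}^2}V>0$, and suppose that $H^1_V(\mathbb{R}^2)$ is continuously embedded in $L^\tau_V(\mathbb{R}^2)$ for some $\tau>2$. Assume moreover that one of the following holds: (1) $V$ is uniformly continuous on $\mathbb{R}^2$; (2) there exists $m>0$ such that \[ \sup_{\substack{x\neq y\\ |y-x|\le m/\sqrt{V(y)}}}\frac{|V(y)-V(x)|}{|y-x|}=o\big(V^{3/2}(y)\big)\quad\text{as }|y|\to+\infty . \] Then the embedding of $H^1_V(\mathbb{R}^2)$ in $L^\tau_V(\mathbb{R}^2)$ is not compact.
   Context: $H^1_V(\mathbb{R}^2)$ is the completion of $C_0^\infty(\mathbb{R}^2)$ with respect to the norm $\|u\|_V=\left(\int_{\mathbb{R}^2}(|\nabla u|^2+V(x)|u|^2)\,dx\right)^{1/2}$. $L^\tau_V(\mathbb{R}^2)$ is the space of measurable $u$ with $\int_{\mathbb{R}^2}V(x)|u|^\tau dx<+\infty$, normed by $\left(\int V|u|^\tau\right)^{1/\tau}$. *)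

theory Defs
  imports "HOL-Analysis.Analysis"
begin

fun dderiv :: "(real^2) list \<Rightarrow> (real^2 \<Rightarrow> real) \<Rightarrow> (real^2 \<Rightarrow> real)" where
  "dderiv [] f = f"
| "dderiv (v # vs) f = (\<lambda>x. frechet_derivative (dderiv vs f) (at x) v)"

definition smooth :: "(real^2 \<Rightarrow> real) \<Rightarrow> bool" where
  "smooth f \<longleftrightarrow> (\<forall>vs x. dderiv vs f differentiable (at x))"

definition test_fun :: "(real^2 \<Rightarrow> real) \<Rightarrow> bool" where
  "test_fun u \<longleftrightarrow> smooth u \<and> compact (closure {x. u x \<noteq> 0})"

definition grad_sq :: "(real^2 \<Rightarrow> real) \<Rightarrow> real^2 \<Rightarrow> real" where
  "grad_sq u x = (\<Sum>i\<in>UNIV. (frechet_derivative u (at x) (axis i 1))\<^sup>2)"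

definition HV_norm :: "(real^2 \<Rightarrow> real) \<Rightarrow> (real^2 \<Rightarrow> real) \<Rightarrow> real" where
  "HV_norm V u = sqrt (\<integral>x. grad_sq u x + V x * (u x)\<^sup>2 \<partial>lborel)"

definition LV_norm :: "(real^2 \<Rightarrow> real) \<Rightarrow> real \<Rightarrow> (real^2 \<Rightarrow> real) \<Rightarrow> real" where
  "LV_norm V \<tau> u = (\<integral>x. V x * \<bar>u x\<bar> powr \<tau> \<partial>lborel) powr (1 / \<tau>)"

text \<open>Continuous embedding of H^1_V (completion of test functions) into L^tau_V:
  the inclusion is bounded on the dense subspace of test functions.\<close>
definition cont_embedded :: "(real^2 \<Rightarrow> real) \<Rightarrow> real \<Rightarrow> bool" where
  "cont_embedded V \<tau> \<longleftrightarrow> (\<exists>C. \<forall>u. test_fun u \<longrightarrow> LV_norm V \<tau> u \<le> C * HV_norm V u)"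

text \<open>Compactness of the embedding: every H^1_V-bounded sequence (of test functions,
  which are dense) has a subsequence that is Cauchy (hence convergent) in L^tau_V.\<close>
definition compact_embedded :: "(real^2 \<Rightarrow> real) \<Rightarrow> real \<Rightarrow> bool" where
  "compact_embedded V \<tau> \<longleftrightarrow>
     (\<forall>s :: nat \<Rightarrow> real^2 \<Rightarrow> real. (\<forall>n. test_fun (s n)) \<and> (\<exists>B::real. \<forall>n. HV_norm V (s n) \<le> B) \<longrightarrow>
        (\<exists>r::nat\<Rightarrow>nat. strict_mono r \<and>
           (\<forall>e::real>0. \<exists>N::nat. \<forall>m\<ge>N. \<forall>n\<ge>N. LV_norm V \<tau> (\<lambda>x. s (r m) x - s (r n) x) < e)))"

end

theory Submission
  imports Defs "HOL-Computational_Algebra.Polynomial"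
begin

text \<open>
  In two dimensions the Dirichlet integral is invariant under dilations. A fixed smooth bump
  rescaled to radius \<open>r = \<rho> / sqrt (V y)\<close> therefore has \<open>H\<^sup>1\<^sub>V\<close>-norm bounded
  independently of the centre \<open>y\<close>, as long as \<open>V\<close> stays comparable to \<open>V y\<close> on its support;
  each of the two alternative hypotheses guarantees this comparability for large \<open>|y|\<close>.
  By the same scaling the weighted \<open>L\<^sup>\<tau>\<^sub>V\<close>-mass of such a bump is of order
  \<open>V y * r\<^sup>2 = \<rho>\<^sup>2\<close>, so bumps with disjoint supports centred at points tending to infinity
  form a bounded sequence that has no Cauchy subsequence in \<open>L\<^sup>\<tau>\<^sub>V\<close>.
\<close>

section \<open>Smooth functions built from \<open>exp (- 1 / t)\<close>\<close>

definition flat_poly_exp :: "real poly \<Rightarrow> real \<Rightarrow> real" where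
  "flat_poly_exp p t = (if t > 0 then poly p (1 / t) * exp (- 1 / t) else 0)"

text \<open>\<open>(p(1/t) exp(-1/t))' = (1/t)\<^sup>2 (p(1/t) - p'(1/t)) exp(-1/t)\<close> for \<open>t > 0\<close>.\<close>

definition flat_deriv_poly :: "real poly \<Rightarrow> real poly" where
  "flat_deriv_poly p = [:0, 0, 1:] * (p - pderiv p)"

lemma poly_times_exp_neg_tendsto_0: "((\<lambda>s. poly p s * exp (- s)) \<longlongrightarrow> (0::real)) at_top"
proof -
  have expand: "poly p s * exp (- s) = (\<Sum>i\<le>degree p. coeff p i * (s ^ i / exp s))" for s
    by (simp add: poly_altdef exp_minus divide_inverse sum_distrib_right mult.assoc)
  have "((\<lambda>s. \<Sum>i\<le>degree p. coeff p i * (s ^ i / exp s)) \<longlongrightarrow> (\<Sum>i\<le>degree p. coeff p i * 0)) at_top"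
    by (intro tendsto_intros tendsto_power_div_exp_0)
  then show ?thesis
    unfolding expand by simp
qed

lemma flat_poly_exp_tendsto_0: "(flat_poly_exp p \<longlongrightarrow> 0) (at_right 0)"
proof -
  have "((\<lambda>t. poly p (inverse t) * exp (- inverse t)) \<longlongrightarrow> 0) (at_right (0::real))"
    using filterlim_compose[OF poly_times_exp_neg_tendsto_0 filterlim_inverse_at_top_right] by simp
  moreover have "\<forall>\<^sub>F t in at_right 0. poly p (inverse t) * exp (- inverse t) = flat_poly_exp p t"
    by (auto simp: eventually_at_right_field flat_poly_exp_def inverse_eq_divide intro!: exI[of _ 1])
  ultimately show ?thesis
    by (rule Lim_transform_eventually)
qed

lemma flat_poly_exp_has_derivative_pos:
  assumes "0 < t"
  shows "(flat_poly_exp p has_real_derivative flat_poly_exp (flat_deriv_poly p) t) (at t)"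
proof -
  have inv: "((\<lambda>t. 1 / t) has_real_derivative - 1 / t\<^sup>2) (at t)"
    using assms by (auto intro!: derivative_eq_intros simp: power2_eq_square)
  have neg_inv: "((\<lambda>t. - 1 / t) has_real_derivative 1 / t\<^sup>2) (at t)"
    using DERIV_minus[OF inv] by simp
  have "((\<lambda>t. poly p (1 / t) * exp (- 1 / t)) has_real_derivative
      poly (pderiv p) (1 / t) * (- 1 / t\<^sup>2) * exp (- 1 / t) + exp (- 1 / t) * (1 / t\<^sup>2) * poly p (1 / t))
      (at t)"
    by (rule DERIV_mult[OF DERIV_chain2[OF poly_DERIV inv] DERIV_chain2[OF DERIV_exp neg_inv]])
  moreover have "poly (pderiv p) (1 / t) * (- 1 / t\<^sup>2) * exp (- 1 / t) + exp (- 1 / t) * (1 / t\<^sup>2) * poly p (1 / t)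
      = flat_poly_exp (flat_deriv_poly p) t"
    using assms by (simp add: flat_poly_exp_def flat_deriv_poly_def power2_eq_square algebra_simps)
  ultimately have "((\<lambda>t. poly p (1 / t) * exp (- 1 / t)) has_real_derivative
      flat_poly_exp (flat_deriv_poly p) t) (at t)"
    by simp
  then show ?thesis
    by (rule has_field_derivative_transform_within_open[where S = "{0<..}"])
      (use assms in \<open>auto simp: flat_poly_exp_def\<close>)
qed

lemma flat_poly_exp_has_derivative_0: "(flat_poly_exp p has_real_derivative 0) (at 0)"
proof -
  have left: "((\<lambda>s. (flat_poly_exp p s - flat_poly_exp p 0) / (s - 0)) \<longlongrightarrow> 0) (at_left 0)"
    by (rule tendsto_eventually)
      (auto simp: eventually_at_left_field flat_poly_exp_def intro!: exI[of _ "-1"])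
  have "\<forall>\<^sub>F s in at_right 0.
      flat_poly_exp ([:0, 1:] * p) s = (flat_poly_exp p s - flat_poly_exp p 0) / (s - 0)"
    by (auto simp: eventually_at_right_field flat_poly_exp_def intro!: exI[of _ 1])
  then have right: "((\<lambda>s. (flat_poly_exp p s - flat_poly_exp p 0) / (s - 0)) \<longlongrightarrow> 0) (at_right 0)"
    using flat_poly_exp_tendsto_0 by (rule Lim_transform_eventually[rotated])
  show ?thesis
    unfolding has_field_derivative_iff using filterlim_split_at[OF left right] by simp
qed

lemma flat_poly_exp_has_derivative:
  "(flat_poly_exp p has_real_derivative flat_poly_exp (flat_deriv_poly p) t) (at t)"
proof -
  consider "0 < t" | "t < 0" | "t = 0"
    by linarith
  then show ?thesis
  proof cases
    case 1
    then show ?thesis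
      by (rule flat_poly_exp_has_derivative_pos)
  next
    case 2
    have "((\<lambda>_. 0) has_real_derivative flat_poly_exp (flat_deriv_poly p) t) (at t)"
      using 2 by (simp add: flat_poly_exp_def)
    then show ?thesis
      by (rule has_field_derivative_transform_within_open[where S = "{..<0}"])
        (use 2 in \<open>auto simp: flat_poly_exp_def\<close>)
  next
    case 3
    then show ?thesis
      using flat_poly_exp_has_derivative_0[of p] by (simp add: flat_poly_exp_def[of _ 0])
  qed
qed

definition exp_neg_inv_deriv :: "nat \<Rightarrow> real \<Rightarrow> real" where
  "exp_neg_inv_deriv k = flat_poly_exp ((flat_deriv_poly ^^ k) 1)"

lemma exp_neg_inv_deriv_0: "exp_neg_inv_deriv 0 t = (if t > 0 then exp (- 1 / t) else 0)"
  by (simp add: exp_neg_inv_deriv_def flat_poly_exp_def)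

lemma exp_neg_inv_deriv_nonpos: "t \<le> 0 \<Longrightarrow> exp_neg_inv_deriv k t = 0"
  by (simp add: exp_neg_inv_deriv_def flat_poly_exp_def)

lemma exp_neg_inv_deriv_has_derivative:
  "(exp_neg_inv_deriv k has_real_derivative exp_neg_inv_deriv (Suc k) t) (at t)"
  unfolding exp_neg_inv_deriv_def by (simp add: flat_poly_exp_has_derivative)

lemma continuous_on_exp_neg_inv_deriv [continuous_intros]:
  "continuous_on S g \<Longrightarrow> continuous_on S (\<lambda>x. exp_neg_inv_deriv k (g x))"
proof -
  have "continuous_on UNIV (exp_neg_inv_deriv k)"
    by (intro continuous_at_imp_continuous_on ballI DERIV_isCont[OF exp_neg_inv_deriv_has_derivative])
  then show "continuous_on S g \<Longrightarrow> continuous_on S (\<lambda>x. exp_neg_inv_deriv k (g x))"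
    by (rule continuous_on_compose2) auto
qed

lemma exp_neg_inv_deriv_bounded_le_1: "\<exists>M. \<forall>t\<le>1. \<bar>exp_neg_inv_deriv k t\<bar> \<le> M"
proof -
  have "continuous_on {0..1} (exp_neg_inv_deriv k)"
    using continuous_on_exp_neg_inv_deriv[OF continuous_on_id] by simp
  then have "bounded (exp_neg_inv_deriv k ` {0..1})"
    by (intro compact_imp_bounded compact_continuous_image compact_Icc)
  then obtain M where M: "\<forall>t\<in>{0..1}. \<bar>exp_neg_inv_deriv k t\<bar> \<le> M"
    unfolding bounded_iff by auto
  have "\<bar>exp_neg_inv_deriv k t\<bar> \<le> M" if "t \<le> 1" for t
  proof (cases "t \<le> 0")
    case True
    then show ?thesis
      using M by (force simp: exp_neg_inv_deriv_nonpos)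
  next
    case False
    then show ?thesis
      using M that by simp
  qed
  then show ?thesis
    by blast
qed

inductive smooth_closure :: "(nat \<Rightarrow> real \<Rightarrow> real) \<Rightarrow> ('a::real_normed_vector \<Rightarrow> real) \<Rightarrow> bool"
  for \<phi> :: "nat \<Rightarrow> real \<Rightarrow> real"
where
  const: "smooth_closure \<phi> (\<lambda>x. c)"
| linear: "bounded_linear f \<Longrightarrow> smooth_closure \<phi> f"
| add: "smooth_closure \<phi> f \<Longrightarrow> smooth_closure \<phi> g \<Longrightarrow> smooth_closure \<phi> (\<lambda>x. f x + g x)"
| mult: "smooth_closure \<phi> f \<Longrightarrow> smooth_closure \<phi> g \<Longrightarrow> smooth_closure \<phi> (\<lambda>x. f x * g x)"
| comp: "smooth_closure \<phi> f \<Longrightarrow> smooth_closure \<phi> (\<lambda>x. \<phi> k (f x))"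

lemma smooth_closure_has_derivative:
  assumes \<phi>: "\<And>k t. (\<phi> k has_real_derivative \<phi> (Suc k) t) (at t)"
    and "smooth_closure \<phi> f"
  shows "\<exists>D. (\<forall>x. (f has_derivative D x) (at x)) \<and> (\<forall>v. smooth_closure \<phi> (\<lambda>x. D x v))"
  using assms(2)
proof (induction rule: smooth_closure.induct)
  case (const c)
  show ?case
    by (rule exI[of _ "\<lambda>x v. 0"]) (auto intro: smooth_closure.const)
next
  case (linear f)
  then show ?case
    by (intro exI[of _ "\<lambda>x. f"]) (auto intro: smooth_closure.const bounded_linear_imp_has_derivative)
next
  case (add f g)
  then obtain Df Dg where "\<forall>x. (f has_derivative Df x) (at x)" "\<forall>v. smooth_closure \<phi> (\<lambda>x. Df x v)"
    "\<forall>x. (g has_derivative Dg x) (at x)" "\<forall>v. smooth_closure \<phi> (\<lambda>x. Dg x v)"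
    by blast
  then show ?case
    by (intro exI[of _ "\<lambda>x v. Df x v + Dg x v"]) (auto intro: smooth_closure.add has_derivative_add)
next
  case (mult f g)
  then obtain Df Dg where "\<forall>x. (f has_derivative Df x) (at x)" "\<forall>v. smooth_closure \<phi> (\<lambda>x. Df x v)"
    "\<forall>x. (g has_derivative Dg x) (at x)" "\<forall>v. smooth_closure \<phi> (\<lambda>x. Dg x v)"
    by blast
  with mult.hyps show ?case
    by (intro exI[of _ "\<lambda>x v. f x * Dg x v + Df x v * g x"])
      (auto intro!: smooth_closure.add smooth_closure.mult has_derivative_mult)
next
  case (comp f k)
  then obtain Df where Df: "\<forall>x. (f has_derivative Df x) (at x)" "\<forall>v. smooth_closure \<phi> (\<lambda>x. Df x v)"
    by blast
  have "((\<lambda>x. \<phi> k (f x)) has_derivative (\<lambda>v. \<phi> (Suc k) (f x) * Df x v)) (at x)" for x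
    using has_derivative_compose[OF Df(1)[rule_format] \<phi>[unfolded has_field_derivative_def]]
    by (simp add: o_def)
  with Df comp.hyps show ?case
    by (intro exI[of _ "\<lambda>x v. \<phi> (Suc k) (f x) * Df x v"])
      (auto intro!: smooth_closure.mult smooth_closure.comp)
qed

lemma smooth_closure_dderiv:
  assumes "\<And>k t. (\<phi> k has_real_derivative \<phi> (Suc k) t) (at t)"
    and "smooth_closure \<phi> f"
  shows "smooth_closure \<phi> (dderiv vs f)"
proof (induction vs)
  case Nil
  then show ?case
    using assms(2) by simp
next
  case (Cons v vs)
  then obtain D where D: "\<forall>x. (dderiv vs f has_derivative D x) (at x)" "\<forall>v. smooth_closure \<phi> (\<lambda>x. D x v)"
    using smooth_closure_has_derivative[of \<phi> "dderiv vs f"] assms(1) by blast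
  have "dderiv (v # vs) f = (\<lambda>x. D x v)"
    using frechet_derivative_at[OF D(1)[rule_format]] by auto
  with D show ?case
    by simp
qed

lemma smooth_closure_imp_smooth:
  assumes "\<And>k t. (\<phi> k has_real_derivative \<phi> (Suc k) t) (at t)"
    and "smooth_closure \<phi> f"
  shows "smooth f"
  unfolding smooth_def differentiable_def
  using smooth_closure_has_derivative[OF assms(1) smooth_closure_dderiv[OF assms]] by blast

section \<open>Rescaled bumps\<close>

definition bump :: "real^2 \<Rightarrow> real \<Rightarrow> real^2 \<Rightarrow> real" where
  "bump y r x = exp_neg_inv_deriv 0 (1 - ((x - y) \<bullet> (x - y)) / r\<^sup>2)"

lemma inner_diff_self_eq_dist: "(x - y) \<bullet> (x - y) = (dist x y)\<^sup>2"
  by (simp add: dist_norm power2_norm_eq_inner)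

lemma bump_nonneg: "0 \<le> bump y r x"
  and bump_le_1: "bump y r x \<le> 1"
  by (simp_all add: bump_def exp_neg_inv_deriv_0)

lemma bump_eq_0:
  assumes "0 < r" "r \<le> dist x y"
  shows "bump y r x = 0"
proof -
  have "r\<^sup>2 \<le> (dist x y)\<^sup>2"
    using assms by (simp add: power_mono)
  then show ?thesis
    using assms(1) by (simp add: bump_def inner_diff_self_eq_dist exp_neg_inv_deriv_nonpos)
qed

lemma bump_ge_exp:
  assumes "0 < r" "dist x y \<le> r / 2"
  shows "exp (- 4 / 3) \<le> bump y r x"
proof -
  define t where "t = 1 - (dist x y)\<^sup>2 / r\<^sup>2"
  have "(dist x y)\<^sup>2 \<le> (r / 2)\<^sup>2"
    using assms by (simp add: power_mono)
  then have "3 / 4 \<le> t"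
    using assms(1) by (simp add: t_def power_divide field_simps)
  then have "- 4 / 3 \<le> - 1 / t"
    by (simp add: field_simps)
  with \<open>3 / 4 \<le> t\<close> show ?thesis
    by (simp add: bump_def inner_diff_self_eq_dist exp_neg_inv_deriv_0 flip: t_def)
qed

lemma continuous_on_bump: "continuous_on UNIV (bump y r)"
  unfolding bump_def divide_inverse by (intro continuous_intros)

lemma smooth_closure_bump: "smooth_closure exp_neg_inv_deriv (bump y r)"
proof -
  have "bump y r = (\<lambda>x. exp_neg_inv_deriv 0 (1 + (- inverse (r\<^sup>2)) *
      ((x $ 1 + - y $ 1) * (x $ 1 + - y $ 1) + (x $ 2 + - y $ 2) * (x $ 2 + - y $ 2))))"
    by (simp add: fun_eq_iff bump_def inner_vec_def sum_2 divide_inverse algebra_simps)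
  then show ?thesis
    by (simp only:) (intro smooth_closure.comp smooth_closure.add smooth_closure.mult
        smooth_closure.const smooth_closure.linear[OF bounded_linear_vec_nth])
qed

lemma test_fun_bump:
  assumes "0 < r"
  shows "test_fun (bump y r)"
proof -
  have "{x. bump y r x \<noteq> 0} \<subseteq> cball y r"
    using bump_eq_0[OF assms] by (force simp: dist_commute)
  then have "closure {x. bump y r x \<noteq> 0} \<subseteq> cball y r"
    by (intro closure_minimal) auto
  then have "compact (closure {x. bump y r x \<noteq> 0})"
    by (simp add: compact_eq_bounded_closed bounded_subset[OF bounded_cball])
  then show ?thesis
    unfolding test_fun_def
    using smooth_closure_imp_smooth[OF exp_neg_inv_deriv_has_derivative smooth_closure_bump] by simp
qed

lemma grad_sq_bump:
  "grad_sq (bump y r) x = (exp_neg_inv_deriv 1 (1 - (dist x y)\<^sup>2 / r\<^sup>2))\<^sup>2 * (4 * (dist x y)\<^sup>2 / r ^ 4)"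
proof -
  define a where "a = exp_neg_inv_deriv 1 (1 - (dist x y)\<^sup>2 / r\<^sup>2)"
  have "((\<lambda>x. 1 - ((x - y) \<bullet> (x - y)) / r\<^sup>2) has_derivative (\<lambda>w. - (2 * ((x - y) \<bullet> w) / r\<^sup>2))) (at x)"
    unfolding divide_inverse
    by (auto intro!: derivative_eq_intros simp: inner_commute algebra_simps)
  from has_derivative_compose[OF this
      exp_neg_inv_deriv_has_derivative[of 0, unfolded has_field_derivative_def]]
  have "(bump y r has_derivative (\<lambda>w. a * - (2 * ((x - y) \<bullet> w) / r\<^sup>2))) (at x)"
    by (simp add: a_def bump_def[abs_def] o_def inner_diff_self_eq_dist)
  moreover define z where "z = x - y"
  ultimately have "grad_sq (bump y r) x = (\<Sum>i\<in>UNIV. (a * - (2 * z $ i / r\<^sup>2))\<^sup>2)"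
    unfolding grad_sq_def by (simp add: frechet_derivative_at[symmetric] inner_axis)
  also have "\<dots> = 4 * a\<^sup>2 / r ^ 4 * (\<Sum>i\<in>UNIV. (z $ i)\<^sup>2)"
  proof -
    have "(a * - (2 * z $ i / r\<^sup>2))\<^sup>2 = 4 * a\<^sup>2 / r ^ 4 * (z $ i)\<^sup>2" for i
      by (simp add: power_mult_distrib power_divide)
    then show ?thesis
      by (simp add: sum_distrib_left)
  qed
  also have "(\<Sum>i\<in>UNIV. (z $ i)\<^sup>2) = (dist x y)\<^sup>2"
    unfolding z_def inner_diff_self_eq_dist[symmetric] by (simp add: inner_vec_def power2_eq_square)
  finally show ?thesis
    by (simp add: a_def)
qed

lemma grad_sq_bump_le:
  assumes "0 < r" and M: "\<forall>t\<le>1. \<bar>exp_neg_inv_deriv 1 t\<bar> \<le> M"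
  shows "grad_sq (bump y r) x \<le> indicator (cball y r) x * (4 * M\<^sup>2 / r\<^sup>2)"
proof (cases "dist x y \<le> r")
  case True
  define t where "t = 1 - (dist x y)\<^sup>2 / r\<^sup>2"
  have "t \<le> 1"
    by (simp add: t_def)
  with M have "\<bar>exp_neg_inv_deriv 1 t\<bar>\<^sup>2 \<le> M\<^sup>2"
    by (intro power_mono) auto
  moreover have "4 * (dist x y)\<^sup>2 / r ^ 4 \<le> 4 * r\<^sup>2 / r ^ 4"
    using True by (simp add: power_mono divide_right_mono)
  moreover have "4 * r\<^sup>2 / r ^ 4 = 4 / r\<^sup>2"
    using assms(1) by (simp add: power4_eq_xxxx power2_eq_square)
  ultimately have "(exp_neg_inv_deriv 1 t)\<^sup>2 * (4 * (dist x y)\<^sup>2 / r ^ 4) \<le> M\<^sup>2 * (4 / r\<^sup>2)"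
    by (intro mult_mono) auto
  then have "grad_sq (bump y r) x \<le> 4 * M\<^sup>2 / r\<^sup>2"
    by (simp add: grad_sq_bump t_def mult.commute)
  with True show ?thesis
    by (simp add: dist_commute)
next
  case False
  then have "r\<^sup>2 < (dist x y)\<^sup>2"
    using assms(1) by (simp add: power_strict_mono)
  with False assms(1) show ?thesis
    by (simp add: grad_sq_bump exp_neg_inv_deriv_nonpos dist_commute)
qed

section \<open>Norm estimates for bumps\<close>

lemma integral_indicator_cball_mult:
  fixes y :: "real^2" and K :: real
  assumes "0 \<le> r"
  shows integrable_indicator_cball_mult: "integrable lborel (\<lambda>x. indicator (cball y r) x * K)"
    and "(\<integral>x. indicator (cball y r) x * K \<partial>lborel) = K * (pi * r\<^sup>2)"
proof -
  show "integrable lborel (\<lambda>x. indicator (cball y r) x * K)"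
    using borel_integrable_compact[OF compact_cball, where f = "\<lambda>_. K"] by simp
  show "(\<integral>x. indicator (cball y r) x * K \<partial>lborel) = K * (pi * r\<^sup>2)"
    using circle_area[OF assms, of y] by (simp add: content_cball_conv_ball)
qed

lemma integral_le_cball_bound:
  fixes f :: "real^2 \<Rightarrow> real"
  assumes "0 \<le> r" "0 \<le> K" "\<And>x. f x \<le> indicator (cball y r) x * K"
  shows "(\<integral>x. f x \<partial>lborel) \<le> K * (pi * r\<^sup>2)"
proof -
  have "(\<integral>x. f x \<partial>lborel) \<le> (\<integral>x. indicator (cball y r) x * K \<partial>lborel)"
    using assms by (intro integral_mono' integrable_indicator_cball_mult) auto
  also have "\<dots> = K * (pi * r\<^sup>2)"
    by (rule integral_indicator_cball_mult[OF assms(1)])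
  finally show ?thesis .
qed

lemma integral_ge_cball_bound:
  fixes f :: "real^2 \<Rightarrow> real"
  assumes "integrable lborel f" "0 \<le> r" "\<And>x. indicator (cball y r) x * K \<le> f x"
  shows "K * (pi * r\<^sup>2) \<le> (\<integral>x. f x \<partial>lborel)"
proof -
  have "K * (pi * r\<^sup>2) = (\<integral>x. indicator (cball y r) x * K \<partial>lborel)"
    by (rule integral_indicator_cball_mult(2)[OF assms(2), symmetric])
  also have "\<dots> \<le> (\<integral>x. f x \<partial>lborel)"
    using assms by (intro integral_mono integrable_indicator_cball_mult) auto
  finally show ?thesis .
qed

lemma integrable_continuous_vanishing_outside_compact:
  fixes f :: "'a::euclidean_space \<Rightarrow> real"
  assumes "continuous_on UNIV f" "compact S" "\<And>x. x \<notin> S \<Longrightarrow> f x = 0"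
  shows "integrable lborel f"
proof -
  have "f = (\<lambda>x. indicator S x *\<^sub>R f x)"
    using assms(3) by (auto simp: fun_eq_iff indicator_def)
  then show ?thesis
    using borel_integrable_compact[OF assms(2) continuous_on_subset[OF assms(1)]] by simp
qed

lemma HV_norm_bump_le:
  fixes V :: "real^2 \<Rightarrow> real"
  assumes r: "0 < r" and M: "\<forall>t\<le>1. \<bar>exp_neg_inv_deriv 1 t\<bar> \<le> M"
    and "0 \<le> v" and V: "\<forall>x\<in>cball y r. V x \<le> v"
  shows "HV_norm V (bump y r) \<le> sqrt (pi * (4 * M\<^sup>2 + v * r\<^sup>2))"
proof -
  have "grad_sq (bump y r) x + V x * (bump y r x)\<^sup>2 \<le> indicator (cball y r) x * (4 * M\<^sup>2 / r\<^sup>2 + v)" for x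
  proof (cases "x \<in> cball y r")
    case True
    have "(bump y r x)\<^sup>2 \<le> 1"
      by (simp add: bump_nonneg bump_le_1 power_le_one)
    moreover have "V x \<le> v"
      using True V by blast
    ultimately have "V x * (bump y r x)\<^sup>2 \<le> v"
      using mult_left_le[of "(bump y r x)\<^sup>2" "V x"] mult_nonpos_nonneg[of "V x" "(bump y r x)\<^sup>2"] \<open>0 \<le> v\<close>
      by (cases "0 \<le> V x") auto
    with True grad_sq_bump_le[OF r M, of y x] show ?thesis
      by simp
  next
    case False
    then show ?thesis
      using bump_eq_0[OF r] grad_sq_bump_le[OF r M, of y x] by (simp add: dist_commute)
  qed
  then have "(\<integral>x. grad_sq (bump y r) x + V x * (bump y r x)\<^sup>2 \<partial>lborel)
      \<le> (4 * M\<^sup>2 / r\<^sup>2 + v) * (pi * r\<^sup>2)"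
    using r \<open>0 \<le> v\<close> by (intro integral_le_cball_bound) auto
  also have "\<dots> = pi * (4 * M\<^sup>2 + v * r\<^sup>2)"
    using r by (simp add: field_simps)
  finally show ?thesis
    unfolding HV_norm_def by simp
qed

lemma bump_diff_powr_ge:
  assumes "0 < \<tau>" "0 < r" "0 < r'" "r + r' \<le> dist y y'" "dist x y \<le> r / 2"
  shows "exp (- 4 / 3) powr \<tau> \<le> \<bar>bump y r x - bump y' r' x\<bar> powr \<tau>"
proof -
  have "dist y y' \<le> dist y x + dist x y'"
    by (rule dist_triangle)
  with assms(2,4,5) have "r' \<le> dist x y'"
    by (simp add: dist_commute)
  then have "bump y' r' x = 0"
    by (rule bump_eq_0[OF assms(3)])
  moreover have "exp (- 4 / 3) \<le> bump y r x"
    by (rule bump_ge_exp[OF assms(2,5)])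
  ultimately show ?thesis
    using assms(1) by (intro powr_mono2) auto
qed

lemma LV_norm_bump_diff_ge:
  fixes V :: "real^2 \<Rightarrow> real"
  assumes V_cont: "continuous_on UNIV V" and V_nonneg: "\<forall>x. 0 \<le> V x"
    and "0 < \<tau>" "0 < r" "0 < r'" and sep: "r + r' \<le> dist y y'"
    and "0 \<le> v" and V: "\<forall>x\<in>cball y (r / 2). v \<le> V x"
  shows "(pi * v * r\<^sup>2 * exp (- 4 / 3) powr \<tau> / 4) powr (1 / \<tau>)
    \<le> LV_norm V \<tau> (\<lambda>x. bump y r x - bump y' r' x)"
proof -
  define g where "g x = V x * \<bar>bump y r x - bump y' r' x\<bar> powr \<tau>" for x
  have "continuous_on UNIV g"
    unfolding g_def using \<open>0 < \<tau>\<close>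
    by (intro continuous_on_mult V_cont continuous_on_powr' continuous_intros continuous_on_bump) auto
  moreover have "g x = 0" if "x \<notin> cball y r \<union> cball y' r'" for x
    using that bump_eq_0[OF \<open>0 < r\<close>] bump_eq_0[OF \<open>0 < r'\<close>] \<open>0 < \<tau>\<close>
    by (simp add: g_def dist_commute)
  ultimately have "integrable lborel g"
    by (intro integrable_continuous_vanishing_outside_compact[where S = "cball y r \<union> cball y' r'"])
      (auto simp: compact_Un)
  moreover have "indicator (cball y (r / 2)) x * (v * exp (- 4 / 3) powr \<tau>) \<le> g x" for x
  proof (cases "x \<in> cball y (r / 2)")
    case True
    then have "exp (- 4 / 3) powr \<tau> \<le> \<bar>bump y r x - bump y' r' x\<bar> powr \<tau>"
      using assms(3-6) by (intro bump_diff_powr_ge) (simp_all add: dist_commute)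
    moreover have "v \<le> V x"
      using True V by blast
    ultimately show ?thesis
      using True V_nonneg unfolding g_def by (simp add: mult_mono)
  next
    case False
    then show ?thesis
      using V_nonneg by (simp add: g_def)
  qed
  ultimately have "v * exp (- 4 / 3) powr \<tau> * (pi * (r / 2)\<^sup>2) \<le> (\<integral>x. g x \<partial>lborel)"
    using \<open>0 < r\<close> by (intro integral_ge_cball_bound) auto
  then have "pi * v * r\<^sup>2 * exp (- 4 / 3) powr \<tau> / 4 \<le> (\<integral>x. g x \<partial>lborel)"
    by (simp add: power_divide field_simps)
  then show ?thesis
    unfolding LV_norm_def g_def using \<open>0 < \<tau>\<close> \<open>0 \<le> v\<close> by (intro powr_mono2) auto
qed

lemma HV_norm_scaled_bump_le:
  fixes V :: "real^2 \<Rightarrow> real"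
  assumes "0 < \<rho>" "0 < V y" "\<forall>x\<in>cball y (\<rho> / sqrt (V y)). V x \<le> 2 * V y"
    and M: "\<forall>t\<le>1. \<bar>exp_neg_inv_deriv 1 t\<bar> \<le> M"
  shows "HV_norm V (bump y (\<rho> / sqrt (V y))) \<le> sqrt (pi * (4 * M\<^sup>2 + 2 * \<rho>\<^sup>2))"
proof -
  have "HV_norm V (bump y (\<rho> / sqrt (V y))) \<le> sqrt (pi * (4 * M\<^sup>2 + 2 * V y * (\<rho> / sqrt (V y))\<^sup>2))"
    using assms by (intro HV_norm_bump_le[OF _ M]) auto
  moreover have "2 * V y * (\<rho> / sqrt (V y))\<^sup>2 = 2 * \<rho>\<^sup>2"
    using assms(2) by (simp add: power_divide)
  ultimately show ?thesis
    by simp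
qed

lemma LV_norm_scaled_bump_diff_ge:
  fixes V :: "real^2 \<Rightarrow> real"
  assumes "continuous_on UNIV V" "\<forall>x. 0 < V x" "0 < \<tau>" "0 < \<rho>"
    and "\<forall>x\<in>cball y (\<rho> / sqrt (V y)). V y / 2 \<le> V x"
    and "\<rho> / sqrt (V y) + \<rho> / sqrt (V y') \<le> dist y y'"
  shows "(pi * \<rho>\<^sup>2 * exp (- 4 / 3) powr \<tau> / 8) powr (1 / \<tau>)
    \<le> LV_norm V \<tau> (\<lambda>x. bump y (\<rho> / sqrt (V y)) x - bump y' (\<rho> / sqrt (V y')) x)"
proof -
  define r where "r = \<rho> / sqrt (V y)"
  have "0 < r" "0 < \<rho> / sqrt (V y')"
    using assms(2,4) by (simp_all add: r_def)
  moreover have "\<forall>x\<in>cball y (r / 2). V y / 2 \<le> V x"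
    using assms(5) \<open>0 < r\<close> by (auto simp: r_def)
  ultimately have "(pi * (V y / 2) * r\<^sup>2 * exp (- 4 / 3) powr \<tau> / 4) powr (1 / \<tau>)
      \<le> LV_norm V \<tau> (\<lambda>x. bump y r x - bump y' (\<rho> / sqrt (V y')) x)"
    using assms by (intro LV_norm_bump_diff_ge) (auto simp: r_def less_imp_le)
  moreover have "pi * (V y / 2) * r\<^sup>2 * exp (- 4 / 3) powr \<tau> / 4 = pi * \<rho>\<^sup>2 * exp (- 4 / 3) powr \<tau> / 8"
    using assms(2)[rule_format, of y] by (simp add: r_def power_divide)
  ultimately show ?thesis
    by (simp only: r_def)
qed

section \<open>Comparability of \<open>V\<close> on scaled balls\<close>

definition comparable_on_scaled_balls :: "('a::real_normed_vector \<Rightarrow> real) \<Rightarrow> real \<Rightarrow> bool" where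
  "comparable_on_scaled_balls V \<rho> \<longleftrightarrow>
     (\<forall>\<^sub>F y in at_infinity. \<forall>x\<in>cball y (\<rho> / sqrt (V y)). V y / 2 \<le> V x \<and> V x \<le> 2 * V y)"

lemma uniformly_continuous_imp_comparable_on_scaled_balls:
  fixes V :: "'a::real_normed_vector \<Rightarrow> real"
  assumes "uniformly_continuous_on UNIV V" "0 < c" "\<forall>x. c \<le> V x"
  shows "\<exists>\<rho>>0. comparable_on_scaled_balls V \<rho>"
proof -
  obtain d where "0 < d" and d: "\<forall>x\<in>UNIV. \<forall>x'\<in>UNIV. dist x' x < d \<longrightarrow> dist (V x') (V x) < c"
    using assms(1,2) unfolding uniformly_continuous_on_def by blast
  define \<rho> where "\<rho> = d / 2 * sqrt c"
  have "V y / 2 \<le> V x \<and> V x \<le> 2 * V y" if "x \<in> cball y (\<rho> / sqrt (V y))" for x y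
  proof -
    have "0 < V y"
      using assms(2,3) by (meson less_le_trans)
    then have "\<rho> / sqrt (V y) \<le> \<rho> / sqrt c"
      using assms(2,3) \<open>0 < d\<close> by (intro divide_left_mono) (auto simp: \<rho>_def)
    also have "\<dots> < d"
      using assms(2) \<open>0 < d\<close> by (simp add: \<rho>_def)
    finally have "\<bar>V x - V y\<bar> < c"
      using that d by (simp add: dist_commute dist_real_def)
    with assms(3)[rule_format, of x] assms(3)[rule_format, of y] show ?thesis
      by linarith
  qed
  then have "comparable_on_scaled_balls V \<rho>"
    unfolding comparable_on_scaled_balls_def by (intro always_eventually allI ballI)
  moreover have "0 < \<rho>"
    using assms(2) \<open>0 < d\<close> by (simp add: \<rho>_def)
  ultimately show ?thesis
    by blast
qed

lemma slowly_varying_imp_comparable_on_scaled_balls: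
  fixes V :: "'a::real_normed_vector \<Rightarrow> real"
  assumes "0 < m" and V_pos: "\<forall>x. 0 < V x"
    and slow: "\<forall>\<epsilon>>0. \<forall>\<^sub>F y in at_infinity. \<forall>x. x \<noteq> y \<and> dist y x \<le> m / sqrt (V y) \<longrightarrow>
      \<bar>V y - V x\<bar> / dist y x \<le> \<epsilon> * V y powr (3/2)"
  shows "comparable_on_scaled_balls V m"
proof -
  have "\<forall>\<^sub>F y in at_infinity. \<forall>x. x \<noteq> y \<and> dist y x \<le> m / sqrt (V y) \<longrightarrow>
      \<bar>V y - V x\<bar> / dist y x \<le> 1 / (2 * m) * V y powr (3/2)"
    using slow[rule_format, of "1 / (2 * m)"] \<open>0 < m\<close> by simp
  then show ?thesis
    unfolding comparable_on_scaled_balls_def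
  proof (rule eventually_mono, intro ballI)
    fix y x
    assume y: "\<forall>x. x \<noteq> y \<and> dist y x \<le> m / sqrt (V y) \<longrightarrow>
        \<bar>V y - V x\<bar> / dist y x \<le> 1 / (2 * m) * V y powr (3/2)"
      and x: "x \<in> cball y (m / sqrt (V y))"
    have "\<bar>V y - V x\<bar> \<le> V y / 2"
    proof (cases "x = y")
      case False
      have "dist y x \<le> m / sqrt (V y)"
        using x by simp
      with y False have "\<bar>V y - V x\<bar> / dist y x \<le> 1 / (2 * m) * V y powr (3/2)"
        by blast
      with False have "\<bar>V y - V x\<bar> \<le> 1 / (2 * m) * V y powr (3/2) * dist y x"
        by (simp add: pos_divide_le_eq)
      also have "\<dots> \<le> 1 / (2 * m) * V y powr (3/2) * (m / sqrt (V y))"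
        using x \<open>0 < m\<close> by (intro mult_left_mono) auto
      also have "V y powr (3/2) = V y * sqrt (V y)"
        using V_pos[rule_format, of y] powr_add[of "V y" 1 "1/2"] by (simp add: powr_half_sqrt)
      also have "1 / (2 * m) * (V y * sqrt (V y)) * (m / sqrt (V y)) = V y / 2"
        using \<open>0 < m\<close> V_pos[rule_format, of y] by (simp add: field_simps)
      finally show ?thesis .
    qed (use V_pos in \<open>simp add: less_imp_le\<close>)
    then show "V y / 2 \<le> V x \<and> V x \<le> 2 * V y"
      using V_pos[rule_format, of y] by linarith
  qed
qed

section \<open>Non-compactness\<close>

lemma separated_sequence_outside_ball:
  "\<exists>y :: nat \<Rightarrow> 'a::euclidean_space.
    (\<forall>n. T \<le> norm (y n)) \<and> (\<forall>m n. m \<noteq> n \<longrightarrow> d \<le> dist (y m) (y n))"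
proof -
  obtain e :: 'a where e: "norm e = 1"
    using vector_choose_size zero_le_one by blast
  define y where "y n = (max T 0 + max d 0 * real n) *\<^sub>R e" for n
  have "T \<le> norm (y n)" for n
  proof -
    have "norm (y n) = max T 0 + max d 0 * real n"
      using e by (simp add: y_def)
    moreover have "0 \<le> max d 0 * real n"
      by simp
    ultimately show ?thesis
      by linarith
  qed
  moreover have "d \<le> dist (y m) (y n)" if "m \<noteq> n" for m n
  proof -
    have "y m - y n = (max d 0 * (real m - real n)) *\<^sub>R e"
      by (simp add: y_def algebra_simps)
    then have "dist (y m) (y n) = max d 0 * \<bar>real m - real n\<bar>"
      using e by (simp add: dist_norm abs_mult)
    moreover have "1 \<le> \<bar>real m - real n\<bar>"
      using that by linarith
    ultimately show ?thesis
      using mult_left_mono[of 1 "\<bar>real m - real n\<bar>" "max d 0"] by linarith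
  qed
  ultimately show ?thesis
    by blast
qed

lemma not_compact_embedded_if_separated:
  fixes u :: "nat \<Rightarrow> real^2 \<Rightarrow> real"
  assumes "\<forall>n. test_fun (u n)" "\<forall>n. HV_norm V (u n) \<le> B" "0 < \<delta>"
    and sep: "\<forall>m n. m \<noteq> n \<longrightarrow> \<delta> \<le> LV_norm V \<tau> (\<lambda>x. u m x - u n x)"
  shows "\<not> compact_embedded V \<tau>"
proof
  assume "compact_embedded V \<tau>"
  then have "(\<forall>n. test_fun (u n)) \<and> (\<exists>B. \<forall>n. HV_norm V (u n) \<le> B) \<longrightarrow>
      (\<exists>s :: nat \<Rightarrow> nat. strict_mono s \<and>
        (\<forall>e>0. \<exists>N. \<forall>m\<ge>N. \<forall>n\<ge>N. LV_norm V \<tau> (\<lambda>x. u (s m) x - u (s n) x) < e))"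
    unfolding compact_embedded_def by (rule spec)
  then obtain s :: "nat \<Rightarrow> nat" where "strict_mono s"
    and "\<forall>e>0. \<exists>N. \<forall>m\<ge>N. \<forall>n\<ge>N. LV_norm V \<tau> (\<lambda>x. u (s m) x - u (s n) x) < e"
    using assms(1,2) by blast
  then obtain N where "\<forall>m\<ge>N. \<forall>n\<ge>N. LV_norm V \<tau> (\<lambda>x. u (s m) x - u (s n) x) < \<delta>"
    using \<open>0 < \<delta>\<close> by blast
  then have "LV_norm V \<tau> (\<lambda>x. u (s (Suc N)) x - u (s N) x) < \<delta>"
    by simp
  moreover have "s (Suc N) \<noteq> s N"
    using \<open>strict_mono s\<close> by (simp add: strict_mono_eq)
  with sep have "\<delta> \<le> LV_norm V \<tau> (\<lambda>x. u (s (Suc N)) x - u (s N) x)"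
    by blast
  ultimately show False
    by simp
qed

lemma not_compact_embedded_if_comparable_on_scaled_balls:
  fixes V :: "real^2 \<Rightarrow> real"
  assumes V_cont: "continuous_on UNIV V" and "0 < c" and V_ge: "\<forall>x. c \<le> V x"
    and "0 < \<tau>" and "0 < \<rho>" and "comparable_on_scaled_balls V \<rho>"
  shows "\<not> compact_embedded V \<tau>"
proof -
  obtain T where T: "\<forall>y. T \<le> norm y \<longrightarrow>
      (\<forall>x\<in>cball y (\<rho> / sqrt (V y)). V y / 2 \<le> V x \<and> V x \<le> 2 * V y)"
    using assms(6) unfolding comparable_on_scaled_balls_def eventually_at_infinity by blast
  \<comment> \<open>\<open>\<rho> / sqrt c\<close> bounds all radii, so the supports of the bumps are disjoint.\<close>
  obtain y :: "nat \<Rightarrow> real^2" where "\<forall>n. T \<le> norm (y n)"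
    and y_sep: "\<forall>m n. m \<noteq> n \<longrightarrow> 2 * (\<rho> / sqrt c) \<le> dist (y m) (y n)"
    using separated_sequence_outside_ball by blast
  have V_pos: "\<forall>x. 0 < V x"
    using V_ge \<open>0 < c\<close> less_le_trans by blast
  have radius_le: "\<rho> / sqrt (V (y n)) \<le> \<rho> / sqrt c" for n
    using V_ge V_pos \<open>0 < c\<close> \<open>0 < \<rho>\<close> by (auto intro!: divide_left_mono)
  obtain M where M: "\<forall>t\<le>1. \<bar>exp_neg_inv_deriv 1 t\<bar> \<le> M"
    using exp_neg_inv_deriv_bounded_le_1 by blast
  have "HV_norm V (bump (y n) (\<rho> / sqrt (V (y n)))) \<le> sqrt (pi * (4 * M\<^sup>2 + 2 * \<rho>\<^sup>2))" for n
    using T \<open>\<forall>n. T \<le> norm (y n)\<close> V_pos \<open>0 < \<rho>\<close> by (intro HV_norm_scaled_bump_le[OF _ _ _ M]) auto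
  moreover have "(pi * \<rho>\<^sup>2 * exp (- 4 / 3) powr \<tau> / 8) powr (1 / \<tau>) \<le> LV_norm V \<tau>
      (\<lambda>x. bump (y m) (\<rho> / sqrt (V (y m))) x - bump (y n) (\<rho> / sqrt (V (y n))) x)" if "m \<noteq> n" for m n
    using T \<open>\<forall>n. T \<le> norm (y n)\<close> y_sep radius_le[of m] radius_le[of n] that
    by (intro LV_norm_scaled_bump_diff_ge[OF V_cont V_pos \<open>0 < \<tau>\<close> \<open>0 < \<rho>\<close>]) force+
  ultimately show ?thesis
    using test_fun_bump V_pos \<open>0 < \<rho>\<close>
    by (intro not_compact_embedded_if_separated[where u = "\<lambda>n. bump (y n) (\<rho> / sqrt (V (y n)))"
          and \<delta> = "(pi * \<rho>\<^sup>2 * exp (- 4 / 3) powr \<tau> / 8) powr (1 / \<tau>)"]) auto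
qed

theorem corollary2p8:
  fixes V :: "real^2 \<Rightarrow> real" and \<tau> :: real
  assumes "continuous_on UNIV V"
    and "\<exists>c>0. \<forall>x. V x \<ge> c"
    and "\<tau> > 2"
    and "cont_embedded V \<tau>"
    and "uniformly_continuous_on UNIV V \<or>
         (\<exists>m>0. \<forall>\<epsilon>>0. \<forall>\<^sub>F y in at_infinity.
            \<forall>x. x \<noteq> y \<and> dist y x \<le> m / sqrt (V y) \<longrightarrow>
              \<bar>V y - V x\<bar> / dist y x \<le> \<epsilon> * V y powr (3/2))"
  shows "\<not> compact_embedded V \<tau>"
proof -
  obtain c where c: "0 < c" "\<forall>x. c \<le> V x"
    using assms(2) by blast
  have V_pos: "\<forall>x. 0 < V x"
    using c less_le_trans by blast
  from assms(5) have "\<exists>\<rho>>0. comparable_on_scaled_balls V \<rho>"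
  proof
    assume "uniformly_continuous_on UNIV V"
    then show ?thesis
      using uniformly_continuous_imp_comparable_on_scaled_balls c by blast
  next
    assume "\<exists>m>0. \<forall>\<epsilon>>0. \<forall>\<^sub>F y in at_infinity.
      \<forall>x. x \<noteq> y \<and> dist y x \<le> m / sqrt (V y) \<longrightarrow> \<bar>V y - V x\<bar> / dist y x \<le> \<epsilon> * V y powr (3/2)"
    then show ?thesis
      using slowly_varying_imp_comparable_on_scaled_balls[OF _ V_pos] by blast
  qed
  then obtain \<rho> where "0 < \<rho>" "comparable_on_scaled_balls V \<rho>"
    by blast
  with assms(3) show ?thesis
    using not_compact_embedded_if_comparable_on_scaled_balls[OF assms(1) c] by simp
qed

end
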